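(* Let $\Gamma$ be a 3-colex, $c\neq c'$ colors, and let $s$ be the syndrome of a $Z$-error on the 3D color code on $\Gamma$. Then the restriction $\pi_{cc'}(s)$ of $s$ to the vertices of $\Gamma^{*\setminus cc'}$ is a valid syndrome for a $Z$-error on the 3D toric code on $\Gamma^{*\setminus cc'}$, i.e. there exists a $Z$-error on the edges of $\Gamma^{*\setminus cc'}$ whose toric-code syndrome is $\pi_{cc'}(s)$.
   Context: Colors are $\{r,b,g,y\}$. A 3-colex $\Gamma$ is a 3-dimensional cell complex without boundary in which every vertex is 4-valent and lies in exactly four 3-cells, and whose 3-cells are properly 4-colored: every face lies in exactly two 3-cells, which have different colors. The dual complex $\Gamma^*$ has an $i$-cell for every $(3-i)$-cell of $\Gamma$, with incidences reversed; every 3-cell of $\Gamma^*$ is a tetrahedron. A vertex of $\Gamma^*$ is given the color of the corresponding 3-cell of $\Gamma$, so the four vertices of each tetrahedron have distinct colors; an edge with endpoint colors $x,y$ is an $xy$-edge. The 3D color code on $\Gamma$ has one qubit per tetrahedron $\nu$ of $\Gamma^*$, $X$-stabilizer generators $\prod_{\nu\ni v}X_\nu$ for vertices $v$ and $Z$-stabilizer generators $\prod_{\nu\supset e}Z_\nu$ for edges $e$. The syndrome of a $Z$-error $\prod_{\nu\in\Omega}Z_\nu$ is the function on vertices $s_v=|\{\nu\in\Omega:v\in\nu\}|\bmod 2$. For distinct $c,c'$ with remaining colors $d,d'$, the minor complex $\Gamma^{*\setminus cc'}$ is obtained by deleting all vertices of colors $c,c'$; its vertices are the $d$- and $d'$-vertices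 and its edges the $dd'$-edges of $\Gamma^*$. The 3D toric code on $\Gamma^{*\setminus cc'}$ has qubits on edges and $X$-checks $\prod_{e\ni v}X_e$ on vertices; the syndrome of a $Z$-error on edges at a vertex is the parity of the number of error edges incident to it. *)

theory Defs
  imports Main
begin

datatype color = Red | Blue | Green | Yellow

text \<open>Combinatorial data of the dual complex of a 3-colex:
  vertex set V (vertices of the dual = 3-cells of the colex), coloured by col;
  edge set E (edges of the dual = faces of the colex), with endpoint map ends;
  tetrahedra T (3-cells of the dual = vertices of the colex), with vertex map
  tverts and edge map tedges.  Cells are abstract objects (multiple cells on
  the same vertex set are allowed).\<close>
definition colex_dual ::
  "'v set \<Rightarrow> 'e set \<Rightarrow> 't set \<Rightarrow> ('v \<Rightarrow> color) \<Rightarrow> ('e \<Rightarrow> 'v set)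
   \<Rightarrow> ('t \<Rightarrow> 'v set) \<Rightarrow> ('t \<Rightarrow> 'e set) \<Rightarrow> bool" where
  "colex_dual V E T col ends tverts tedges \<longleftrightarrow>
     finite V \<and> finite E \<and> finite T \<and>
     \<comment> \<open>each face of the colex lies in exactly two 3-cells of different colours:
         each dual edge has two endpoints of different colours\<close>
     (\<forall>e\<in>E. ends e \<subseteq> V \<and> (\<exists>x y. ends e = {x, y} \<and> col x \<noteq> col y)) \<and>
     \<comment> \<open>each vertex of the colex is 4-valent and in four 3-cells, properly coloured:
         each dual 3-cell is a tetrahedron whose four vertices have distinct colours\<close>
     (\<forall>\<nu>\<in>T. tverts \<nu> \<subseteq> V \<and> card (tverts \<nu>) = 4 \<and> col ` tverts \<nu> = UNIV \<and>
        tedges \<nu> \<subseteq> E \<and> card (tedges \<nu>) = 6 \<and>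
        (\<forall>e\<in>tedges \<nu>. ends e \<subseteq> tverts \<nu>) \<and>
        (\<forall>x\<in>tverts \<nu>. \<forall>y\<in>tverts \<nu>. x \<noteq> y \<longrightarrow> (\<exists>e\<in>tedges \<nu>. ends e = {x, y}))) \<and>
     \<comment> \<open>every vertex and every edge of the dual lies in some tetrahedron\<close>
     (\<forall>v\<in>V. \<exists>\<nu>\<in>T. v \<in> tverts \<nu>) \<and>
     (\<forall>e\<in>E. \<exists>\<nu>\<in>T. e \<in> tedges \<nu>)"

text \<open>Syndrome (as a parity, True = 1) of the colour-code Z-error on the set
  Omega of tetrahedra, at the vertex v.\<close>
definition color_syndrome :: "('t \<Rightarrow> 'v set) \<Rightarrow> 't set \<Rightarrow> 'v \<Rightarrow> bool" where
  "color_syndrome tverts \<Omega> v = odd (card {\<nu>\<in>\<Omega>. v \<in> tverts \<nu>})"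

definition toric_syndrome :: "('e \<Rightarrow> 'v set) \<Rightarrow> 'e set \<Rightarrow> 'v \<Rightarrow> bool" where
  "toric_syndrome ends F v = odd (card {e\<in>F. v \<in> ends e})"

definition minor_vertices :: "'v set \<Rightarrow> ('v \<Rightarrow> color) \<Rightarrow> color \<Rightarrow> color \<Rightarrow> 'v set" where
  "minor_vertices V col c c' = {v\<in>V. col v \<noteq> c \<and> col v \<noteq> c'}"

definition minor_edges ::
  "'e set \<Rightarrow> ('e \<Rightarrow> 'v set) \<Rightarrow> ('v \<Rightarrow> color) \<Rightarrow> color \<Rightarrow> color \<Rightarrow> 'e set" where
  "minor_edges E ends col c c' = {e\<in>E. \<forall>x\<in>ends e. col x \<noteq> c \<and> col x \<noteq> c'}"

end

theory Submission
  imports Defs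
begin

text \<open>Every tetrahedron \<open>\<nu>\<close> has exactly one vertex of each colour, so its \<open>dd'\<close>-edge
  has as endpoints precisely the vertices of \<open>\<nu>\<close> that survive in the minor. Hence, on
  the vertices of the minor, the colour-code syndrome of \<open>\<Omega>\<close> is the toric-code syndrome
  of the mod-2 sum of these edges over \<open>\<nu> \<in> \<Omega>\<close>.\<close>

lemma odd_card_filter_sym_diff_singleton:
  assumes "finite A"
  shows "odd (card {x \<in> sym_diff A {a}. P x}) \<longleftrightarrow> odd (card {x \<in> A. P x}) \<noteq> P a"
proof (cases "a \<in> A")
  case True
  then have "{x \<in> sym_diff A {a}. P x} = {x \<in> A. P x} - {a}" by auto
  with True assms show ?thesis by (cases "P a") (auto simp: card_Diff_singleton)
next
  case False
  then have "{x \<in> sym_diff A {a}. P x} =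
             (if P a then insert a {x \<in> A. P x} else {x \<in> A. P x})"
    by auto
  with False assms show ?thesis by auto
qed

text \<open>Mod-2 linear algebra: a sum of incidence vectors of the \<open>B e\<close>, \<open>e \<in> S\<close>, is the
  incidence vector of a subset of \<open>S\<close>, built up by symmetric differences.\<close>

lemma odd_card_sum_realisable:
  assumes "finite \<Omega>"
    and "\<forall>\<nu>\<in>\<Omega>. \<exists>e\<in>S. \<forall>v\<in>W. v \<in> B e \<longleftrightarrow> v \<in> A \<nu>"
  shows "\<exists>F\<subseteq>S. finite F \<and>
           (\<forall>v\<in>W. odd (card {e \<in> F. v \<in> B e}) \<longleftrightarrow> odd (card {\<nu> \<in> \<Omega>. v \<in> A \<nu>}))"
  using assms
proof (induction \<Omega> rule: finite_induct)
  case empty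
  show ?case by (intro exI[of _ "{}"]) simp
next
  case (insert \<nu> \<Omega>)
  then obtain F where F: "F \<subseteq> S" "finite F"
    "\<forall>v\<in>W. odd (card {e \<in> F. v \<in> B e}) \<longleftrightarrow> odd (card {\<nu> \<in> \<Omega>. v \<in> A \<nu>})"
    by auto
  obtain e where e: "e \<in> S" "\<forall>v\<in>W. v \<in> B e \<longleftrightarrow> v \<in> A \<nu>"
    using insert.prems by auto
  have "insert \<nu> \<Omega> = sym_diff \<Omega> {\<nu>}"
    using insert.hyps(2) by auto
  then have parity_insert: "odd (card {\<mu> \<in> insert \<nu> \<Omega>. v \<in> A \<mu>}) \<longleftrightarrow>
      odd (card {\<mu> \<in> \<Omega>. v \<in> A \<mu>}) \<noteq> (v \<in> A \<nu>)" for v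
    using odd_card_filter_sym_diff_singleton[OF insert.hyps(1)] by metis
  show ?case
  proof (intro exI[of _ "sym_diff F {e}"] conjI ballI)
    fix v assume "v \<in> W"
    then show "odd (card {e' \<in> sym_diff F {e}. v \<in> B e'}) \<longleftrightarrow>
               odd (card {\<mu> \<in> insert \<nu> \<Omega>. v \<in> A \<mu>})"
      using odd_card_filter_sym_diff_singleton[OF F(2)] parity_insert F(3) e(2) by auto
  qed (use F e in auto)
qed

lemma card_UNIV_color: "card (UNIV :: color set) = 4"
proof -
  have UNIV_eq: "(UNIV :: color set) = {Red, Blue, Green, Yellow}"
    using color.exhaust by auto
  show ?thesis unfolding UNIV_eq by simp
qed

lemma card_other_colors:
  assumes "(c :: color) \<noteq> c'"
  shows "card {z. z \<noteq> c \<and> z \<noteq> c'} = 2"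
proof -
  have "{z. z \<noteq> c \<and> z \<noteq> c'} = UNIV - {c, c'}" by auto
  then show ?thesis using assms card_UNIV_color by (simp add: card_Diff_subset)
qed

lemma colex_dual_finite_tetrahedra:
  assumes "colex_dual V E T col ends tverts tedges"
  shows "finite T"
  using assms unfolding colex_dual_def by (elim conjE)

lemma colex_dual_tetrahedron:
  assumes "colex_dual V E T col ends tverts tedges" and "\<nu> \<in> T"
  shows "card (tverts \<nu>) = 4" "col ` tverts \<nu> = UNIV" "tedges \<nu> \<subseteq> E"
    "\<And>x y. x \<in> tverts \<nu> \<Longrightarrow> y \<in> tverts \<nu> \<Longrightarrow> x \<noteq> y \<Longrightarrow> \<exists>e\<in>tedges \<nu>. ends e = {x, y}"
proof -
  have "\<forall>\<nu>\<in>T. tverts \<nu> \<subseteq> V \<and> card (tverts \<nu>) = 4 \<and> col ` tverts \<nu> = UNIV \<and>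
        tedges \<nu> \<subseteq> E \<and> card (tedges \<nu>) = 6 \<and>
        (\<forall>e\<in>tedges \<nu>. ends e \<subseteq> tverts \<nu>) \<and>
        (\<forall>x\<in>tverts \<nu>. \<forall>y\<in>tverts \<nu>. x \<noteq> y \<longrightarrow> (\<exists>e\<in>tedges \<nu>. ends e = {x, y}))"
    using assms(1) unfolding colex_dual_def by (elim conjE)
  then show "card (tverts \<nu>) = 4" "col ` tverts \<nu> = UNIV" "tedges \<nu> \<subseteq> E"
    "\<And>x y. x \<in> tverts \<nu> \<Longrightarrow> y \<in> tverts \<nu> \<Longrightarrow> x \<noteq> y \<Longrightarrow> \<exists>e\<in>tedges \<nu>. ends e = {x, y}"
    using assms(2) by simp_all
qed

lemma colex_dual_tetrahedron_edge:
  assumes "colex_dual V E T col ends tverts tedges" and "\<nu> \<in> T" and "c \<noteq> c'"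
  shows "\<exists>e\<in>tedges \<nu>. ends e = {x \<in> tverts \<nu>. col x \<noteq> c \<and> col x \<noteq> c'}"
proof -
  let ?R = "{x \<in> tverts \<nu>. col x \<noteq> c \<and> col x \<noteq> c'}"
  note tetrahedron = colex_dual_tetrahedron[OF assms(1,2)]
  have "finite (tverts \<nu>)"
    using tetrahedron(1) card.infinite by fastforce
  then have "inj_on col (tverts \<nu>)"
    by (rule eq_card_imp_inj_on) (simp add: tetrahedron(1,2) card_UNIV_color)
  then have "card ?R = card (col ` ?R)"
    by (simp add: card_image inj_on_subset)
  also have "col ` ?R = {z. z \<noteq> c \<and> z \<noteq> c'}"
    using tetrahedron(2) by auto
  finally have "card ?R = 2"
    using card_other_colors[OF assms(3)] by simp
  then obtain x y where "x \<noteq> y" and R_eq: "?R = {x, y}"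
    by (metis card_2_iff)
  moreover have "x \<in> tverts \<nu>" "y \<in> tverts \<nu>"
    using R_eq by blast+
  ultimately obtain e where "e \<in> tedges \<nu>" "ends e = {x, y}"
    using tetrahedron(4) by blast
  with R_eq show ?thesis by metis
qed

lemma colex_dual_minor_edge:
  assumes "colex_dual V E T col ends tverts tedges" and "\<nu> \<in> T" and "c \<noteq> c'"
  shows "\<exists>e\<in>minor_edges E ends col c c'.
           \<forall>v\<in>minor_vertices V col c c'. v \<in> ends e \<longleftrightarrow> v \<in> tverts \<nu>"
proof -
  obtain e where "e \<in> tedges \<nu>" and ends_e: "ends e = {x \<in> tverts \<nu>. col x \<noteq> c \<and> col x \<noteq> c'}"
    using colex_dual_tetrahedron_edge[OF assms] by blast
  moreover have "tedges \<nu> \<subseteq> E"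
    using colex_dual_tetrahedron(3)[OF assms(1,2)] .
  ultimately have "e \<in> minor_edges E ends col c c'"
    unfolding minor_edges_def by auto
  moreover have "\<forall>v\<in>minor_vertices V col c c'. v \<in> ends e \<longleftrightarrow> v \<in> tverts \<nu>"
    unfolding minor_vertices_def ends_e by auto
  ultimately show ?thesis
    by (rule bexI[rotated])
qed

theorem corollary4:
  fixes V :: "'v set" and E :: "'e set" and T :: "'t set"
    and col :: "'v \<Rightarrow> color" and ends :: "'e \<Rightarrow> 'v set"
    and tverts :: "'t \<Rightarrow> 'v set" and tedges :: "'t \<Rightarrow> 'e set"
    and c c' :: color and \<Omega> :: "'t set"
  assumes "colex_dual V E T col ends tverts tedges"
    and "c \<noteq> c'"
    and "\<Omega> \<subseteq> T"
  shows "\<exists>F \<subseteq> minor_edges E ends col c c'.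
           \<forall>v \<in> minor_vertices V col c c'.
             toric_syndrome ends F v = color_syndrome tverts \<Omega> v"
proof -
  have "finite \<Omega>"
    using colex_dual_finite_tetrahedra[OF assms(1)] assms(3) by (rule finite_subset[rotated])
  moreover have "\<forall>\<nu>\<in>\<Omega>. \<exists>e\<in>minor_edges E ends col c c'.
      \<forall>v\<in>minor_vertices V col c c'. v \<in> ends e \<longleftrightarrow> v \<in> tverts \<nu>"
    using colex_dual_minor_edge[OF assms(1) _ assms(2)] assms(3) by blast
  ultimately obtain F where F: "F \<subseteq> minor_edges E ends col c c'" "finite F"
    "\<forall>v\<in>minor_vertices V col c c'. odd (card {e \<in> F. v \<in> ends e}) \<longleftrightarrow>
                                      odd (card {\<nu> \<in> \<Omega>. v \<in> tverts \<nu>})"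
    by (elim odd_card_sum_realisable[elim_format] exE conjE)
  show ?thesis
    using F(1,3) unfolding toric_syndrome_def color_syndrome_def by (intro exI[of _ F] conjI) simp_all
qed

end
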